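(* Let $\Phi$ be a periodic map cocycle of period $R$ generated by expanding maps of $I$ over $\Omega=\{\omega,\sigma\omega,\dots,\sigma^{R-1}\omega\}$, with Perron--Frobenius cocycle $\mathcal P$. If $\eta\in\mathbb R$ is an eigenvalue of $\mathcal P^{(R)}(\omega)$ acting on $\mathrm{BV}$ (i.e. $\mathcal P^{(R)}(\omega)f=\eta f$ for some $0\neq f\in\mathrm{BV}$), then $$\frac{\log|\eta|}{R}\in\Lambda(\mathcal P(\omega)).$$
   Context: $I=[0,1]$ or $S^1$; $m$ Lebesgue measure. Expanding map: $T:I\to I$ with finite partition $0=a_0<\dots<a_M=1$, continuous on each $(a_{i-1},a_i)$, extending $C^2$ to the closed interval with $|DT|>1$. Perron--Frobenius operator $\mathcal Pf(x)=\sum_{y\in T^{-1}(x)}f(y)/|DT(y)|$ on $\mathrm{BV}$ (real $f\in L^\infty(m)$ of bounded variation modulo null sets, norm $\|f\|=\max\{\|f\|_{L^1},\mathrm{var} f\}$). For maps $\{T_i\}_{i\in Z_K}$ and a shift-invariant $\Omega\subset Z_K^{\mathbb Z}$ with left shift $\sigma$, $\mathcal P^{(n)}(\omega)=\mathcal P_{\omega_{n-1}}\cdots\mathcal P_{\omega_0}$, $\mathcal P_i$ the operator of $T_i$. The cocycle is periodic of period $R$ if $\Omega=\{\omega,\sigma\omega,\dots,\sigma^{R-1}\omega\}$. $\Lambda(\mathcal P(\omega))=\{\limsup_n\frac1n\log\|\mathcal P^{(n)}(\omega)f\|: f\in\mathrm{BV}\}$, with $\log 0=-\infty$. *)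

theory Defs
  imports "HOL-Analysis.Analysis"
begin

definition expanding_map :: "(real \<Rightarrow> real) \<Rightarrow> bool" where
  "expanding_map T \<longleftrightarrow>
     (\<forall>x\<in>{0..1}. T x \<in> {0..1}) \<and>
     (\<exists>M a. M \<ge> 1 \<and> a 0 = 0 \<and> a M = 1 \<and> (\<forall>i<M. a i < a (Suc i)) \<and>
        (\<forall>i<M. continuous_on {a i<..<a (Suc i)} T \<and>
           (\<exists>g g' g''. (\<forall>x\<in>{a i<..<a (Suc i)}. g x = T x) \<and>
              (\<forall>x\<in>{a i..a (Suc i)}.
                 (g has_real_derivative g' x) (at x within {a i..a (Suc i)}) \<and>
                 (g' has_real_derivative g'' x) (at x within {a i..a (Suc i)}) \<and>
                 \<bar>g' x\<bar> > 1) \<and>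
              continuous_on {a i..a (Suc i)} g'')))"

text \<open>Perron--Frobenius operator (pointwise on representatives; the finitely many
non-differentiability points are irrelevant modulo null sets).\<close>
definition PF :: "(real \<Rightarrow> real) \<Rightarrow> (real \<Rightarrow> real) \<Rightarrow> real \<Rightarrow> real" where
  "PF T f x = (\<Sum>y\<in>{y. 0 < y \<and> y < 1 \<and> T y = x \<and> T differentiable (at y)}.
                 f y / \<bar>deriv T y\<bar>)"

fun PFn :: "(nat \<Rightarrow> real \<Rightarrow> real) \<Rightarrow> (int \<Rightarrow> nat) \<Rightarrow> nat \<Rightarrow> (real \<Rightarrow> real) \<Rightarrow> real \<Rightarrow> real" where
  "PFn T \<omega> 0 f = f"
| "PFn T \<omega> (Suc n) f = PF (T (\<omega> (int n))) (PFn T \<omega> n f)"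

abbreviation mI :: "real measure" where
  "mI \<equiv> lebesgue_on {0..1}"

definition pvar :: "(real \<Rightarrow> real) \<Rightarrow> ereal" where
  "pvar g = (SUP p \<in> {(n, x::nat \<Rightarrow> real). (\<forall>k\<le>n. x k \<in> {0..1}) \<and> (\<forall>k<n. x k \<le> x (Suc k))}.
               ereal (\<Sum>k<fst p. \<bar>g (snd p (Suc k)) - g (snd p k)\<bar>))"

definition evar :: "(real \<Rightarrow> real) \<Rightarrow> ereal" where
  "evar f = (INF g \<in> {g. AE x in mI. g x = f x}. pvar g)"

definition BV :: "(real \<Rightarrow> real) \<Rightarrow> bool" where
  "BV f \<longleftrightarrow> f \<in> borel_measurable mI \<and> (\<exists>C. AE x in mI. \<bar>f x\<bar> \<le> C) \<and> evar f < \<infinity>"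

definition L1norm :: "(real \<Rightarrow> real) \<Rightarrow> real" where
  "L1norm f = integral\<^sup>L mI (\<lambda>x. \<bar>f x\<bar>)"

definition bvnorm :: "(real \<Rightarrow> real) \<Rightarrow> real" where
  "bvnorm f = max (L1norm f) (real_of_ereal (evar f))"

definition elog :: "real \<Rightarrow> ereal" where
  "elog x = (if x = 0 then -\<infinity> else ereal (ln x))"

definition lyap_spectrum :: "(nat \<Rightarrow> real \<Rightarrow> real) \<Rightarrow> (int \<Rightarrow> nat) \<Rightarrow> ereal set" where
  "lyap_spectrum T \<omega> =
     {limsup (\<lambda>n. elog (bvnorm (PFn T \<omega> n f)) / ereal (real n)) | f. BV f}"

end

theory Submission
  imports Defs
begin

text \<open>Iterating the eigenvalue equation along the period gives
  \<open>P\<^sup>(\<^sup>k\<^sup>R\<^sup>+\<^sup>j\<^sup>)(\<omega>) f = \<eta>\<^sup>k P\<^sup>(\<^sup>j\<^sup>)(\<omega>) f\<close> almost everywhere. The BV norm ignores null sets and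
  is absolutely homogeneous, so \<open>\<parallel>P\<^sup>(\<^sup>n\<^sup>)(\<omega>) f\<parallel> = \<bar>\<eta>\<bar> ^ (n div R) * c (n mod R)\<close> with
  constants \<open>c j \<ge> 0\<close> and \<open>c 0 = \<parallel>f\<parallel> > 0\<close>. Such a sequence grows at the exponential rate
  \<open>log \<bar>\<eta>\<bar> / R\<close>: the finitely many \<open>c j\<close> only contribute \<open>O(1/n)\<close>, and the rate is attained
  along \<open>n = kR\<close>.\<close>

lemma AE_lebesgue_on_iff_negligible:
  assumes "S \<in> sets lebesgue"
  shows "(AE x in lebesgue_on S. P x) \<longleftrightarrow> (\<exists>N. negligible N \<and> (\<forall>x\<in>S. x \<notin> N \<longrightarrow> P x))"
proof -
  have "(AE x in lebesgue_on S. P x) \<longleftrightarrow> (AE x in lebesgue. x \<in> S \<longrightarrow> P x)"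
    using assms by (intro AE_restrict_space_iff) auto
  also have "\<dots> \<longleftrightarrow> (\<exists>N. negligible N \<and> {x. \<not> (x \<in> S \<longrightarrow> P x)} \<subseteq> N)"
    by (rule eventually_ae_filter_negligible)
  finally show ?thesis by blast
qed

lemma borel_measurable_lebesgue_on_AE_cong:
  fixes f g :: "'a::euclidean_space \<Rightarrow> 'b::euclidean_space"
  assumes S: "S \<in> sets lebesgue" and f: "f \<in> borel_measurable (lebesgue_on S)"
    and ae: "AE x in lebesgue_on S. f x = g x"
  shows "g \<in> borel_measurable (lebesgue_on S)"
proof -
  have S': "S \<inter> space lebesgue \<in> sets lebesgue" using S by simp
  have "(\<lambda>x. indicator S x *\<^sub>R f x) \<in> borel_measurable lebesgue"
    using f borel_measurable_restrict_space_iff[OF S'] by blast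
  moreover have "AE x in lebesgue. x \<in> S \<longrightarrow> f x = g x"
    using AE_restrict_space_iff[OF S', of "\<lambda>x. f x = g x"] ae by simp
  then have "AE x in lebesgue. indicator S x *\<^sub>R f x = indicator S x *\<^sub>R g x"
    by eventually_elim (auto simp: indicator_def)
  ultimately have "(\<lambda>x. indicator S x *\<^sub>R g x) \<in> borel_measurable lebesgue"
    by (rule borel_measurable_AE)
  then show ?thesis using borel_measurable_restrict_space_iff[OF S'] by blast
qed

text \<open>Unlike \<open>integral_cong_AE\<close>, no measurability is assumed: a non-measurable integrand
  has integral \<open>0\<close>, and measurability transfers along a.e. equality.\<close>
lemma integral_lebesgue_on_AE_cong:
  fixes f g :: "'a::euclidean_space \<Rightarrow> real"
  assumes S: "S \<in> sets lebesgue" and ae: "AE x in lebesgue_on S. f x = g x"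
  shows "integral\<^sup>L (lebesgue_on S) f = integral\<^sup>L (lebesgue_on S) g"
proof (cases "f \<in> borel_measurable (lebesgue_on S)")
  case True
  then have "g \<in> borel_measurable (lebesgue_on S)"
    using borel_measurable_lebesgue_on_AE_cong[OF S _ ae] by blast
  then show ?thesis using True ae by (intro integral_cong_AE) auto
next
  case False
  have "AE x in lebesgue_on S. g x = f x" using ae by auto
  then have "g \<notin> borel_measurable (lebesgue_on S)"
    using borel_measurable_lebesgue_on_AE_cong[OF S] False by blast
  then show ?thesis
    using False by (metis borel_measurable_integrable not_integrable_integral_eq)
qed

subsection \<open>The Perron--Frobenius cocycle\<close>

text \<open>Only the differentiability points of \<open>T\<close> enter the sum, and \<open>T\<close> maps the null set where
  \<open>f \<noteq> g\<close> among them to a null set.\<close>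
lemma PF_AE_cong:
  assumes "AE x in mI. f x = g x"
  shows "AE x in mI. PF T f x = PF T g x"
proof -
  have I: "{0..1::real} \<in> sets lebesgue" by simp
  obtain N where N: "negligible N" "\<And>x. x \<in> {0..1} \<Longrightarrow> x \<notin> N \<Longrightarrow> f x = g x"
    using assms unfolding AE_lebesgue_on_iff_negligible[OF I] by blast
  define D where "D = N \<inter> {y. T differentiable (at y)}"
  have "negligible D" unfolding D_def using N(1) negligible_subset by blast
  moreover have "T differentiable_on D"
    unfolding D_def differentiable_on_def by (auto intro: differentiable_at_withinI)
  ultimately have "negligible (T ` D)"
    by (intro negligible_differentiable_image_negligible) auto
  moreover have "PF T f x = PF T g x" if x: "x \<notin> T ` D" for x
    unfolding PF_def
  proof (rule sum.cong[OF refl])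
    fix y assume y: "y \<in> {y. 0 < y \<and> y < 1 \<and> T y = x \<and> T differentiable (at y)}"
    then have "y \<notin> N" using x unfolding D_def by auto
    with y N(2)[of y] show "f y / \<bar>deriv T y\<bar> = g y / \<bar>deriv T y\<bar>" by auto
  qed
  ultimately show ?thesis
    unfolding AE_lebesgue_on_iff_negligible[OF I] by blast
qed

lemma PFn_AE_cong:
  assumes "AE x in mI. f x = g x"
  shows "AE x in mI. PFn T \<omega> n f x = PFn T \<omega> n g x"
  by (induction n) (simp_all add: assms PF_AE_cong)

lemma PF_scale: "PF T (\<lambda>x. c * f x) = (\<lambda>x. c * PF T f x)"
  unfolding PF_def by (auto simp: sum_distrib_left)

lemma PFn_scale: "PFn T \<omega> n (\<lambda>x. c * f x) = (\<lambda>x. c * PFn T \<omega> n f x)"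
  by (induction n) (auto simp: PF_scale)

lemma PFn_add: "PFn T \<omega> (n + m) f = PFn T (\<lambda>k. \<omega> (k + int m)) n (PFn T \<omega> m f)"
  by (induction n) (auto simp: add.commute)

lemma PFn_eigen_iterate:
  assumes per: "\<forall>k. \<omega> (k + int R) = \<omega> k"
    and eig: "AE x in mI. PFn T \<omega> R f x = \<eta> * f x"
  shows "AE x in mI. PFn T \<omega> (j + k * R) f x = \<eta> ^ k * PFn T \<omega> j f x"
proof (induction k)
  case 0
  then show ?case by simp
next
  case (Suc k)
  have shift: "(\<lambda>k. \<omega> (k + int R)) = \<omega>" using per by auto
  have "PFn T \<omega> (j + Suc k * R) f = PFn T \<omega> (j + k * R) (PFn T \<omega> R f)"
    using PFn_add[of T \<omega> "j + k * R" R f] by (simp add: shift ac_simps)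
  moreover have "AE x in mI. PFn T \<omega> (j + k * R) (PFn T \<omega> R f) x
                    = \<eta> * PFn T \<omega> (j + k * R) f x"
    using PFn_AE_cong[OF eig] by (simp add: PFn_scale)
  ultimately show ?case using Suc by (auto elim: eventually_elim2)
qed

subsection \<open>The BV norm\<close>

lemma L1norm_nonneg: "0 \<le> L1norm f"
  unfolding L1norm_def by (rule integral_nonneg_AE) auto

lemma L1norm_AE_cong: "AE x in mI. f x = g x \<Longrightarrow> L1norm f = L1norm g"
  unfolding L1norm_def by (rule integral_lebesgue_on_AE_cong) auto

lemma L1norm_pos:
  assumes "BV f" and "\<not> (AE x in mI. f x = 0)"
  shows "0 < L1norm f"
proof -
  obtain C where C: "AE x in mI. \<bar>f x\<bar> \<le> C" and meas: "f \<in> borel_measurable mI"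
    using assms(1) unfolding BV_def by blast
  have "integrable mI (\<lambda>x. \<bar>f x\<bar>)"
    by (rule finite_measure.integrable_const_bound[where B=C])
       (use C meas finite_measure_lebesgue_on in auto)
  then have "L1norm f \<noteq> 0"
    using assms(2) unfolding L1norm_def by (subst integral_nonneg_eq_0_iff_AE) auto
  then show ?thesis using L1norm_nonneg[of f] by linarith
qed

lemma evar_AE_cong: "AE x in mI. f x = g x \<Longrightarrow> evar f = evar g"
  unfolding evar_def by (rule arg_cong[where f=Inf], rule image_cong) (auto elim: eventually_elim2)

lemma bvnorm_AE_cong: "AE x in mI. f x = g x \<Longrightarrow> bvnorm f = bvnorm g"
  unfolding bvnorm_def using L1norm_AE_cong evar_AE_cong by metis

lemma bvnorm_nonneg: "0 \<le> bvnorm f"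
  unfolding bvnorm_def using L1norm_nonneg by (simp add: le_max_iff_disj)

lemma pvar_nonneg: "0 \<le> pvar g"
  unfolding pvar_def
  by (rule SUP_upper2[where i="(0, \<lambda>_. 0)"]) (auto simp flip: zero_ereal_def)

lemma pvar_scale: "pvar (\<lambda>x. c * g x) = ereal \<bar>c\<bar> * pvar g"
proof -
  have "pvar (\<lambda>x. c * g x)
      = (SUP p \<in> {(n, x::nat \<Rightarrow> real). (\<forall>k\<le>n. x k \<in> {0..1}) \<and> (\<forall>k<n. x k \<le> x (Suc k))}.
           ereal \<bar>c\<bar> * ereal (\<Sum>k<fst p. \<bar>g (snd p (Suc k)) - g (snd p k)\<bar>))"
    unfolding pvar_def
    by (rule SUP_cong) (auto simp: sum_distrib_left abs_mult simp flip: right_diff_distrib)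
  also have "\<dots> = ereal \<bar>c\<bar> * pvar g"
    unfolding pvar_def by (rule SUP_ereal_mult_left) (auto intro!: sum_nonneg exI[of _ 0])
  finally show ?thesis .
qed

lemma ereal_mult_INF:
  fixes c :: real
  assumes "0 < c"
  shows "ereal c * (INF x\<in>A. f x) = (INF x\<in>A. ereal c * f x)"
proof -
  have "bij ((*) (ereal c))"
    by (rule bij_betw_byWitness[of _ "\<lambda>x. x / ereal c"])
       (use assms in \<open>auto simp: ereal_mult_divide ereal_divide_eq\<close>)
  moreover have "mono ((*) (ereal c))"
    using assms by (simp add: mono_def ereal_mult_left_mono)
  ultimately show ?thesis by (simp add: mono_bij_Inf image_image)
qed

lemma evar_scale:
  assumes "c \<noteq> 0"
  shows "evar (\<lambda>x. c * f x) = ereal \<bar>c\<bar> * evar f"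
proof -
  have "{g. AE x in mI. g x = c * f x} = (\<lambda>g x. c * g x) ` {g. AE x in mI. g x = f x}"
  proof (intro set_eqI iffI)
    fix g assume "g \<in> {g. AE x in mI. g x = c * f x}"
    then have "(\<lambda>x. g x / c) \<in> {g. AE x in mI. g x = f x}"
      using assms by (auto elim!: eventually_mono)
    moreover have "g = (\<lambda>x. c * (g x / c))" using assms by simp
    ultimately show "g \<in> (\<lambda>g x. c * g x) ` {g. AE x in mI. g x = f x}"
      by (intro image_eqI[where x="\<lambda>x. g x / c"])
  qed (auto elim!: eventually_mono)
  then have "evar (\<lambda>x. c * f x) = (INF g\<in>{g. AE x in mI. g x = f x}. ereal \<bar>c\<bar> * pvar g)"
    unfolding evar_def by (simp add: image_image pvar_scale)
  also have "\<dots> = ereal \<bar>c\<bar> * evar f"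
    unfolding evar_def using assms by (intro ereal_mult_INF[symmetric]) auto
  finally show ?thesis .
qed

lemma evar_zero: "evar (\<lambda>x. 0) = 0"
proof (rule antisym)
  have "pvar (\<lambda>x. 0) = 0" using pvar_scale[of 0 "\<lambda>x. 0"] by (simp flip: zero_ereal_def)
  then show "evar (\<lambda>x. 0) \<le> 0" unfolding evar_def by (metis (mono_tags) INF_lower mem_Collect_eq AE_I2)
  show "0 \<le> evar (\<lambda>x. 0)" unfolding evar_def by (rule INF_greatest) (rule pvar_nonneg)
qed

lemma bvnorm_scale: "bvnorm (\<lambda>x. c * f x) = \<bar>c\<bar> * bvnorm f"
proof (cases "c = 0")
  case True
  then show ?thesis by (simp add: bvnorm_def L1norm_def evar_zero)
next
  case False
  have "L1norm (\<lambda>x. c * f x) = \<bar>c\<bar> * L1norm f"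
    unfolding L1norm_def by (simp add: abs_mult)
  then show ?thesis
    unfolding bvnorm_def using False by (simp add: evar_scale max_mult_distrib_left)
qed

subsection \<open>Growth rate of a periodically modulated geometric sequence\<close>

lemma limsup_le_of_le_const_over_n:
  fixes u :: "nat \<Rightarrow> ereal"
  assumes "\<And>n. n > 0 \<Longrightarrow> u n \<le> ereal (C / real n + L)"
  shows "limsup u \<le> ereal L"
proof -
  have "(\<lambda>n. C / real n + L) \<longlonglongrightarrow> 0 + L"
    by (intro tendsto_add lim_const_over_n tendsto_const)
  then have "(\<lambda>n. ereal (C / real n + L)) \<longlonglongrightarrow> ereal L" by (intro tendsto_ereal) simp
  then have "limsup (\<lambda>n. ereal (C / real n + L)) = ereal L" by (intro lim_imp_Limsup) simp
  moreover have "limsup u \<le> limsup (\<lambda>n. ereal (C / real n + L))"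
    using assms by (intro Limsup_mono eventually_mono[OF eventually_gt_at_top[of 0]])
  ultimately show ?thesis by simp
qed

lemma limsup_ge_subseq_lim:
  fixes u :: "nat \<Rightarrow> 'a::{complete_linorder, linorder_topology}"
  assumes "strict_mono r" and "(u \<circ> r) \<longlonglongrightarrow> l"
  shows "l \<le> limsup u"
proof -
  have "l = limsup (u \<circ> r)" by (rule lim_imp_Limsup[OF _ assms(2), symmetric]) simp
  also have "\<dots> \<le> limsup u" by (rule limsup_subseq_mono[OF assms(1)])
  finally show ?thesis .
qed

lemma limsup_elog_periodic_geometric_le:
  fixes c :: "nat \<Rightarrow> real"
  assumes R: "R \<ge> 1" and c: "\<And>j. 0 \<le> c j" and e: "0 < e"
  shows "limsup (\<lambda>n. elog (e ^ (n div R) * c (n mod R)) / ereal (real n)) \<le> ereal (ln e / R)"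
proof (rule limsup_le_of_le_const_over_n)
  define L where "L = ln e / R"
  define C where "C = (\<Sum>j<R. \<bar>ln (c j)\<bar>) + \<bar>ln e\<bar>"
  fix n :: nat assume n: "n > 0"
  define k j where "k = n div R" and "j = n mod R"
  define b where "b = e ^ k * c j"
  show "elog (e ^ (n div R) * c (n mod R)) / ereal (real n) \<le> ereal (C / real n + L)"
  proof (cases "c j = 0")
    case True
    then show ?thesis by (simp add: j_def elog_def)
  next
    case False
    then have cj: "c j > 0" using c[of j] by simp
    have Rpos: "real R > 0" and jR: "j < R" using R unfolding j_def by auto
    have "real n = real k * R + real j"
      unfolding k_def j_def by (metis div_mult_mod_eq of_nat_add of_nat_mult)
    then have "real k * ln e = real n * L - (real j / R) * ln e"
      using Rpos by (simp add: L_def field_simps)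
    moreover have "\<bar>(real j / R) * ln e\<bar> \<le> \<bar>ln e\<bar>"
      unfolding abs_mult using jR Rpos by (intro mult_left_le_one_le) auto
    moreover have "ln (c j) \<le> (\<Sum>j<R. \<bar>ln (c j)\<bar>)"
      using member_le_sum[of j "{..<R}" "\<lambda>j. \<bar>ln (c j)\<bar>"] jR by auto
    moreover have "ln b = real k * ln e + ln (c j)"
      using e cj by (simp add: b_def ln_mult ln_realpow)
    ultimately have "ln b \<le> C + real n * L"
      unfolding C_def by linarith
    then have "ln b / real n \<le> C / real n + L"
      using n by (simp add: field_simps)
    moreover have "b > 0" using e cj by (simp add: b_def)
    ultimately show ?thesis using n by (simp add: b_def k_def j_def elog_def)
  qed
qed

lemma limsup_elog_periodic_geometric_ge:
  fixes c :: "nat \<Rightarrow> real"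
  assumes R: "R \<ge> 1" and c0: "0 < c 0" and e: "0 < e"
  shows "ereal (ln e / R) \<le> limsup (\<lambda>n. elog (e ^ (n div R) * c (n mod R)) / ereal (real n))"
proof (rule limsup_ge_subseq_lim)
  define r where "r k = Suc k * R" for k
  show "strict_mono r" unfolding r_def strict_mono_def using R by simp
  have Rpos: "real R > 0" using R by simp
  have "elog (e ^ (r k div R) * c (r k mod R)) / ereal (real (r k))
        = ereal (ln (c 0) / R / real (Suc k) + ln e / R)" for k
  proof -
    have "e ^ (r k div R) * c (r k mod R) = e ^ Suc k * c 0" using R by (simp add: r_def)
    moreover have "ln (e ^ Suc k * c 0) = real (Suc k) * ln e + ln (c 0)"
      using e c0 by (simp add: ln_mult ln_realpow algebra_simps)
    moreover have "real (r k) = real (Suc k) * R" by (simp add: r_def algebra_simps)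
    ultimately show ?thesis using Rpos e c0
      by (simp add: elog_def field_simps del: of_nat_Suc)
  qed
  moreover have "(\<lambda>k. ln (c 0) / R / real (Suc k) + ln e / R) \<longlonglongrightarrow> 0 + ln e / R"
    by (intro tendsto_add tendsto_const LIMSEQ_Suc[OF lim_const_over_n])
  ultimately show "((\<lambda>n. elog (e ^ (n div R) * c (n mod R)) / ereal (real n)) \<circ> r)
                   \<longlonglongrightarrow> ereal (ln e / R)"
    by (simp add: o_def tendsto_ereal del: of_nat_Suc)
qed

lemma limsup_elog_periodic_geometric:
  fixes c :: "nat \<Rightarrow> real"
  assumes R: "R \<ge> 1" and c: "\<And>j. 0 \<le> c j" and c0: "0 < c 0" and e: "0 \<le> e"
  shows "limsup (\<lambda>n. elog (e ^ (n div R) * c (n mod R)) / ereal (real n)) = elog e / ereal (real R)"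
proof (cases "e = 0")
  case True
  have "\<forall>\<^sub>F n in sequentially. elog (e ^ (n div R) * c (n mod R)) / ereal (real n) \<le> -\<infinity>"
    using eventually_ge_at_top[of R]
  proof eventually_elim
    case (elim n)
    then have "n div R \<noteq> 0" and "real n > 0" using R by (auto simp: div_eq_0_iff)
    then show ?case using True by (simp add: elog_def)
  qed
  then have "limsup (\<lambda>n. elog (e ^ (n div R) * c (n mod R)) / ereal (real n))
             \<le> limsup (\<lambda>n. -\<infinity>)"
    by (rule Limsup_mono)
  then show ?thesis using True R by (simp add: Limsup_const elog_def)
next
  case False
  then have "0 < e" using e by simp
  with R c c0 show ?thesis
    using limsup_elog_periodic_geometric_le limsup_elog_periodic_geometric_ge
    by (simp add: antisym elog_def)
qed

theorem lemma2:
  fixes T :: "nat \<Rightarrow> real \<Rightarrow> real" and K R :: nat and \<omega> :: "int \<Rightarrow> nat" and \<eta> :: real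
  assumes maps: "\<forall>i<K. expanding_map (T i)"
    and symb: "\<forall>k. \<omega> k < K"
    and R: "R \<ge> 1"
    and periodic: "\<forall>k. \<omega> (k + int R) = \<omega> k"
    and eig: "\<exists>f. BV f \<and> \<not> (AE x in mI. f x = 0) \<and>
                  (AE x in mI. PFn T \<omega> R f x = \<eta> * f x)"
  shows "elog \<bar>\<eta>\<bar> / ereal (real R) \<in> lyap_spectrum T \<omega>"
proof -
  obtain f where f: "BV f" "\<not> (AE x in mI. f x = 0)" "AE x in mI. PFn T \<omega> R f x = \<eta> * f x"
    using eig by blast
  define c where "c j = bvnorm (PFn T \<omega> j f)" for j
  have norm: "bvnorm (PFn T \<omega> n f) = \<bar>\<eta>\<bar> ^ (n div R) * c (n mod R)" for n
    using bvnorm_AE_cong[OF PFn_eigen_iterate[OF periodic f(3), of "n mod R" "n div R"]]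
    by (simp add: c_def bvnorm_scale power_abs)
  have "0 < c 0" using L1norm_pos[OF f(1,2)] by (simp add: c_def bvnorm_def)
  then have "limsup (\<lambda>n. elog (bvnorm (PFn T \<omega> n f)) / ereal (real n)) = elog \<bar>\<eta>\<bar> / ereal (real R)"
    unfolding norm by (intro limsup_elog_periodic_geometric R) (auto simp: c_def bvnorm_nonneg)
  then show ?thesis unfolding lyap_spectrum_def using f(1) by force
qed

end
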